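(* Fix an integer $d\ge 1$ and let $n$ be the problem size. Let $\mathcal{L}$ be the oracle of a uniformly random $d$-Serial Simon's instance with target period $s=s_d$ (as defined in the context). Let $\mathcal{A}^{\mathcal{L}}=\Pi\circ U_{d+1}\circ\mathcal{L}\circ U_d\circ\cdots\circ\mathcal{L}\circ U_2\circ\mathcal{L}\circ U_1$ be any $\mathrm{QNC}_d$ circuit with oracle access to $\mathcal{L}$, acting on $\mathrm{poly}(n)$ qubits initialised to $|0\cdots0\rangle$, where each $U_j$ is a single-layer unitary (chosen independently of the oracle), each application of $\mathcal{L}$ may consist of polynomially many parallel queries, and $\Pi$ is a computational-basis measurement whose outcome is the output. Then $\Pr[s\leftarrow\mathcal{A}^{\mathcal{L}}]\le \mathrm{poly}(n)\cdot 2^{-n}$; in particular the success probability is negligible.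
   Context: A Simon function on $n$ bits is a pair $(f,s)$ with $s\in\{0,1\}^n\setminus\{0^n\}$ and $f:\{0,1\}^n\to\{0,1\}^n$ two-to-one such that $f(x)=f(y)\iff y\in\{x,x\oplus s\}$; "uniformly random Simon function" means $(f,s)$ is uniform over all such pairs. A single-layer unitary is a product of one- and two-qubit gates acting on pairwise disjoint qubits. The oracle of a function $F$ (possibly taking value $\perp$, encoded as a distinguished string of the response register) acts as $|x\rangle|a\rangle\mapsto|x\rangle|a\oplus F(x)\rangle$; oracle access to several functions means access to all of them (in parallel). $d$-Serial Simon's instance: sample independent uniformly random Simon functions $(f_i,s_i)$, $i=0,1,\dots,d$, on $n$ bits. Define $L_0(x,z)=f_0(x)$ and, for $1\le i\le d$, $L_i(x,z)=f_i(x)$ if $z=s_{i-1}$ and $L_i(x,z)=\perp$ otherwise (for $x,z\in\{0,1\}^n$). The oracle $\mathcal{L}$ is the oracle associated with $(L_0,\dots,L_d)$. The (search) problem is: given $\mathcal{L}$, output $s_d$. *)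

theory Defs
  imports "HOL-Probability.Probability"
begin

definition bits :: "nat \<Rightarrow> bool list set" where
  "bits n = {xs. length xs = n}"

definition xorb :: "bool list \<Rightarrow> bool list \<Rightarrow> bool list" where
  "xorb xs ys = map (\<lambda>(a, b). a \<noteq> b) (zip xs ys)"

text \<open>A Simon function on n bits: a pair (f,s), s a nonzero n-bit string, f a map from
  n-bit strings to n-bit strings (extensional, i.e. undefined outside the n-bit strings,
  so that the set of all such pairs is finite) with f x = f y iff y in {x, x xor s}.\<close>

definition simon_fun :: "nat \<Rightarrow> (bool list \<Rightarrow> bool list) \<Rightarrow> bool list \<Rightarrow> bool" where
  "simon_fun n f s \<longleftrightarrow>
     s \<in> bits n \<and> s \<noteq> replicate n False \<and> f \<in> bits n \<rightarrow>\<^sub>E bits n \<and>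
     (\<forall>x\<in>bits n. \<forall>y\<in>bits n. f x = f y \<longleftrightarrow> (y = x \<or> y = xorb x s))"

definition simon_set :: "nat \<Rightarrow> ((bool list \<Rightarrow> bool list) \<times> bool list) set" where
  "simon_set n = {(f, s). simon_fun n f s}"

text \<open>A d-Serial Simon sinstance: the tuple ((f_0,s_0),...,(f_d,s_d)) of independent
  uniformly random Simon functions, i.e. a uniformly random element of this product set.\<close>

type_synonym sinstance = "nat \<Rightarrow> ((bool list \<Rightarrow> bool list) \<times> bool list)"

definition serial_instances :: "nat \<Rightarrow> nat \<Rightarrow> sinstance set" where
  "serial_instances n d = PiE {..d} (\<lambda>_. simon_set n)"

text \<open>The functions L_i; None stands for the value bottom.\<close>

definition Lfun :: "sinstance \<Rightarrow> nat \<Rightarrow> bool list \<Rightarrow> bool list \<Rightarrow> bool list option" where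
  "Lfun I i x z =
     (if i = 0 then Some (fst (I 0) x)
      else if z = snd (I (i - 1)) then Some (fst (I i) x) else None)"

definition enc :: "nat \<Rightarrow> bool list option \<Rightarrow> bool list" where
  "enc n r = (case r of None \<Rightarrow> True # replicate n False | Some v \<Rightarrow> False # v)"

text \<open>A state of m qubits is a map from m-bit strings (computational basis) to amplitudes.\<close>

type_synonym qstate = "bool list \<Rightarrow> complex"

definition init_state :: "nat \<Rightarrow> qstate" where
  "init_state m = (\<lambda>y. if y = replicate m False then 1 else 0)"

definition upd_pos :: "bool list \<Rightarrow> nat list \<Rightarrow> bool list \<Rightarrow> bool list" where
  "upd_pos y ps a = foldr (\<lambda>(p, b) y. y[p := b]) (zip ps a) y"

definition get_pos :: "bool list \<Rightarrow> nat list \<Rightarrow> bool list" where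
  "get_pos y ps = map (\<lambda>p. y ! p) ps"

text \<open>A gate: the list of qubits it acts on and its matrix, indexed by
  (length ps)-bit strings (row, column).\<close>

type_synonym gate = "nat list \<times> (bool list \<Rightarrow> bool list \<Rightarrow> complex)"

definition valid_gate :: "nat \<Rightarrow> gate \<Rightarrow> bool" where
  "valid_gate m g \<longleftrightarrow>
     (let ps = fst g; G = snd g; k = length ps in
       k \<in> {1, 2} \<and> distinct ps \<and> (\<forall>p\<in>set ps. p < m) \<and>
       (\<forall>a\<in>bits k. \<forall>b\<in>bits k.
          (\<Sum>c\<in>bits k. cnj (G c a) * G c b) = (if a = b then 1 else 0)))"

definition apply_gate :: "nat \<Rightarrow> gate \<Rightarrow> qstate \<Rightarrow> qstate" where
  "apply_gate m g \<psi> = (\<lambda>y. if length y = m then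
       (\<Sum>a\<in>bits (length (fst g)). snd g (get_pos y (fst g)) a * \<psi> (upd_pos y (fst g) a))
     else 0)"

definition valid_layer :: "nat \<Rightarrow> gate list \<Rightarrow> bool" where
  "valid_layer m gs \<longleftrightarrow>
     (\<forall>g\<in>set gs. valid_gate m g) \<and>
     (\<forall>i<length gs. \<forall>j<length gs. i \<noteq> j \<longrightarrow> set (fst (gs ! i)) \<inter> set (fst (gs ! j)) = {})"

definition apply_layer :: "nat \<Rightarrow> gate list \<Rightarrow> qstate \<Rightarrow> qstate" where
  "apply_layer m gs \<psi> = fold (apply_gate m) gs \<psi>"

text \<open>A query (i, xq, aq): query the oracle of L_i with query register at positions xq
  (2n qubits, holding (x,z)) and response register at positions aq (n+1 qubits).\<close>

type_synonym query = "nat \<times> nat list \<times> nat list"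

definition valid_query :: "nat \<Rightarrow> nat \<Rightarrow> nat \<Rightarrow> query \<Rightarrow> bool" where
  "valid_query n d m q \<longleftrightarrow>
     (case q of (i, xq, aq) \<Rightarrow>
        i \<le> d \<and> length xq = 2 * n \<and> length aq = n + 1 \<and> distinct (xq @ aq) \<and>
        (\<forall>p\<in>set (xq @ aq). p < m))"

definition query_qubits :: "query \<Rightarrow> nat set" where
  "query_qubits q = (case q of (i, xq, aq) \<Rightarrow> set xq \<union> set aq)"

definition valid_oracle_layer :: "nat \<Rightarrow> nat \<Rightarrow> nat \<Rightarrow> query list \<Rightarrow> bool" where
  "valid_oracle_layer n d m qs \<longleftrightarrow>
     (\<forall>q\<in>set qs. valid_query n d m q) \<and>
     (\<forall>i<length qs. \<forall>j<length qs. i \<noteq> j \<longrightarrow> query_qubits (qs ! i) \<inter> query_qubits (qs ! j) = {})"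

text \<open>|x>|a> \<mapsto> |x>|a xor L_i(x,z)>; as XOR is an involution the new amplitude at y is the
  old amplitude at y with the response register xored with the encoded answer.\<close>

definition apply_query :: "nat \<Rightarrow> sinstance \<Rightarrow> nat \<Rightarrow> query \<Rightarrow> qstate \<Rightarrow> qstate" where
  "apply_query n I m q \<psi> = (case q of (i, xq, aq) \<Rightarrow>
     (\<lambda>y. if length y = m then
        (let xv = get_pos y xq in
          \<psi> (upd_pos y aq (xorb (get_pos y aq) (enc n (Lfun I i (take n xv) (drop n xv))))))
      else 0))"

definition apply_oracle_layer :: "nat \<Rightarrow> sinstance \<Rightarrow> nat \<Rightarrow> query list \<Rightarrow> qstate \<Rightarrow> qstate" where
  "apply_oracle_layer n I m qs \<psi> = fold (apply_query n I m) qs \<psi>"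

text \<open>A circuit: number of qubits, single layers U 0, ..., U d (the paper's U_1..U_{d+1}),
  oracle layers Q 0, ..., Q (d-1), and the list of measured output qubits.\<close>

record circuit =
  nqubits :: nat
  ulayers :: "nat \<Rightarrow> gate list"
  olayers :: "nat \<Rightarrow> query list"
  outq :: "nat list"

definition valid_circuit :: "nat \<Rightarrow> nat \<Rightarrow> circuit \<Rightarrow> bool" where
  "valid_circuit n d C \<longleftrightarrow>
     (\<forall>j\<le>d. valid_layer (nqubits C) (ulayers C j)) \<and>
     (\<forall>j<d. valid_oracle_layer n d (nqubits C) (olayers C j)) \<and>
     length (outq C) = n \<and> distinct (outq C) \<and> (\<forall>p\<in>set (outq C). p < nqubits C)"

fun run :: "nat \<Rightarrow> sinstance \<Rightarrow> circuit \<Rightarrow> nat \<Rightarrow> qstate" where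
  "run n I C 0 = apply_layer (nqubits C) (ulayers C 0) (init_state (nqubits C))"
| "run n I C (Suc k) = apply_layer (nqubits C) (ulayers C (Suc k))
      (apply_oracle_layer n I (nqubits C) (olayers C k) (run n I C k))"

definition output_prob :: "nat \<Rightarrow> nat \<Rightarrow> sinstance \<Rightarrow> circuit \<Rightarrow> bool list \<Rightarrow> real" where
  "output_prob n d I C t =
     (\<Sum>y\<in>bits (nqubits C). if get_pos y (outq C) = t then (cmod (run n I C d y))\<^sup>2 else 0)"

definition success_prob :: "nat \<Rightarrow> nat \<Rightarrow> circuit \<Rightarrow> real" where
  "success_prob n d C =
     measure_pmf.expectation (pmf_of_set (serial_instances n d))
       (\<lambda>I. output_prob n d I C (snd (I d)))"

end

theory Submission
  imports Defs
begin

text \<open>Hybrid argument. Run the circuit against \emph{shadow} oracles: in the j-th oracle layer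
  every period s_j, ..., s_d is replaced by a value no query register can hold, so L_i answers
  bottom for all i > j. The shadow state before layer j is then independent of s_j, ..., s_d.
  The true and shadow states before measurement differ (in norm) by at most the sum of the
  errors of the individual oracle layers, and the squared error of layer j is at most four times
  the weight the shadow state puts on query registers with z = s_(i-1) for a hidden i. Since
  s_(i-1) is uniform over the 2^n - 1 nonzero strings and independent of that shadow state, this
  weight averages to at most one over 2^n - 1 per query; likewise the final shadow state outputs
  the independent s_d with probability at most 1 / (2^n - 1). Cauchy--Schwarz over the d layers
  and the bound on the number of parallel queries by the number of qubits give the theorem.\<close>

lemma mem_bits_iff [simp]: "xs \<in> bits n \<longleftrightarrow> length xs = n"
  by (simp add: bits_def)

lemma finite_bits [simp]: "finite (bits n)"
  using finite_lists_length_eq[of "UNIV :: bool set" n] by (simp add: bits_def)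

lemma card_bits: "card (bits n) = 2 ^ n"
  using card_lists_length_eq[of "UNIV :: bool set" n] by (simp add: bits_def)

lemma length_xorb [simp]: "length (xorb x y) = min (length x) (length y)"
  by (simp add: xorb_def)

lemma nth_xorb [simp]: "i < length x \<Longrightarrow> i < length y \<Longrightarrow> xorb x y ! i = (x ! i \<noteq> y ! i)"
  by (simp add: xorb_def)

lemma xorb_assoc:
  "length x = length y \<Longrightarrow> length y = length z \<Longrightarrow> xorb (xorb x y) z = xorb x (xorb y z)"
  by (rule nth_equalityI) auto

lemma xorb_self: "xorb x x = replicate (length x) False"
  by (rule nth_equalityI) auto

lemma xorb_replicate_False: "length x = k \<Longrightarrow> xorb x (replicate k False) = x"
  by (rule nth_equalityI) auto

lemma xorb_xorb_cancel: "length a = length e \<Longrightarrow> xorb (xorb a e) e = a"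
  by (rule nth_equalityI) auto

lemma length_get_pos [simp]: "length (get_pos y ps) = length ps"
  by (simp add: get_pos_def)

lemma nth_get_pos [simp]: "i < length ps \<Longrightarrow> get_pos y ps ! i = y ! (ps ! i)"
  by (simp add: get_pos_def)

lemma upd_pos_Nil [simp]: "upd_pos y [] a = y"
  by (simp add: upd_pos_def)

lemma upd_pos_Cons: "upd_pos y (p # ps) (b # a) = (upd_pos y ps a)[p := b]"
  by (simp add: upd_pos_def)

lemma length_upd_pos [simp]: "length (upd_pos y ps a) = length y"
proof (induction ps arbitrary: a)
  case (Cons p ps)
  then show ?case by (cases a) (auto simp: upd_pos_Cons upd_pos_def)
qed simp

lemma nth_upd_pos_notin: "j \<notin> set ps \<Longrightarrow> upd_pos y ps a ! j = y ! j"
proof (induction ps arbitrary: a)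
  case (Cons p ps)
  then show ?case by (cases a) (auto simp: upd_pos_Cons upd_pos_def)
qed simp

lemma nth_upd_pos_in:
  "\<lbrakk>distinct ps; length a = length ps; i < length ps; ps ! i < length y\<rbrakk>
    \<Longrightarrow> upd_pos y ps a ! (ps ! i) = a ! i"
proof (induction ps arbitrary: a i)
  case (Cons p ps)
  then obtain b a' where a: "a = b # a'" by (cases a) auto
  show ?case
  proof (cases i)
    case 0
    then show ?thesis using Cons a by (simp add: upd_pos_Cons)
  next
    case (Suc i')
    then have "ps ! i' \<noteq> p" using Cons by (auto simp: nth_mem)
    then show ?thesis using Cons a Suc by (simp add: upd_pos_Cons)
  qed
qed simp

lemma nth_upd_pos:
  assumes "distinct ps" "length a = length ps" "\<forall>p\<in>set ps. p < length y"
  shows "upd_pos y ps a ! j = (if j \<in> set ps then a ! (THE i. i < length ps \<and> ps ! i = j) else y ! j)"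
proof (cases "j \<in> set ps")
  case True
  then obtain i where i: "i < length ps" "ps ! i = j" by (auto simp: in_set_conv_nth)
  have "(THE i. i < length ps \<and> ps ! i = j) = i"
    using i assms by (auto simp: nth_eq_iff_index_eq)
  then show ?thesis using i assms True nth_upd_pos_in[of ps a i y] by auto
qed (simp add: nth_upd_pos_notin)

lemma get_pos_upd_pos [simp]:
  "\<lbrakk>distinct ps; length a = length ps; \<forall>p\<in>set ps. p < length y\<rbrakk> \<Longrightarrow> get_pos (upd_pos y ps a) ps = a"
  by (rule nth_equalityI) (auto simp: nth_upd_pos_in nth_mem)

lemma get_pos_upd_pos_disjoint: "set qs \<inter> set ps = {} \<Longrightarrow> get_pos (upd_pos y ps a) qs = get_pos y qs"
  by (rule nth_equalityI) (auto simp: nth_upd_pos_notin nth_mem disjoint_iff)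

lemma upd_pos_upd_pos [simp]:
  "\<lbrakk>distinct ps; length a = length ps; length b = length ps; \<forall>p\<in>set ps. p < length y\<rbrakk>
    \<Longrightarrow> upd_pos (upd_pos y ps a) ps b = upd_pos y ps b"
  by (rule nth_equalityI) (auto simp: nth_upd_pos)

lemma upd_pos_get_pos [simp]:
  assumes "distinct ps" "\<forall>p\<in>set ps. p < length y"
  shows "upd_pos y ps (get_pos y ps) = y"
proof (rule nth_equalityI)
  fix j assume "j < length (upd_pos y ps (get_pos y ps))"
  show "upd_pos y ps (get_pos y ps) ! j = y ! j"
  proof (cases "j \<in> set ps")
    case True
    then obtain i where "i < length ps" "ps ! i = j" by (auto simp: in_set_conv_nth)
    then show ?thesis using assms nth_upd_pos_in[of ps "get_pos y ps" i y] by auto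
  qed (simp add: nth_upd_pos_notin)
qed simp

lemma sum_bits_split_positions:
  assumes "distinct ps" and "\<forall>p\<in>set ps. p < m"
  defines "R \<equiv> (\<lambda>y. upd_pos y ps (replicate (length ps) False)) ` bits m"
  shows "(\<Sum>y\<in>bits m. h y) = (\<Sum>r\<in>R. \<Sum>c\<in>bits (length ps). h (upd_pos r ps c))"
proof -
  have "(\<Sum>y\<in>bits m. h y) = (\<Sum>rc\<in>R \<times> bits (length ps). h (upd_pos (fst rc) ps (snd rc)))"
    by (rule sum.reindex_bij_witness[where j = "\<lambda>y. (upd_pos y ps (replicate (length ps) False), get_pos y ps)"
          and i = "\<lambda>rc. upd_pos (fst rc) ps (snd rc)"]) (use assms in \<open>auto simp: R_def\<close>)
  also have "\<dots> = (\<Sum>r\<in>R. \<Sum>c\<in>bits (length ps). h (upd_pos r ps c))"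
    by (simp add: sum.cartesian_product case_prod_unfold)
  finally show ?thesis .
qed

definition mass :: "bool list set \<Rightarrow> qstate \<Rightarrow> real" where
  "mass A \<psi> = (\<Sum>y\<in>A. (cmod (\<psi> y))\<^sup>2)"

definition norm_on :: "bool list set \<Rightarrow> qstate \<Rightarrow> real" where
  "norm_on A \<psi> = sqrt (mass A \<psi>)"

lemma mass_nonneg: "0 \<le> mass A \<psi>"
  by (simp add: mass_def sum_nonneg)

lemma mass_mono: "A \<subseteq> B \<Longrightarrow> finite B \<Longrightarrow> mass A \<psi> \<le> mass B \<psi>"
  unfolding mass_def by (rule sum_mono2) auto

lemma mass_eq_sum_if: "finite B \<Longrightarrow> mass {y\<in>B. P y} \<psi> = (\<Sum>y\<in>B. if P y then (cmod (\<psi> y))\<^sup>2 else 0)"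
  unfolding mass_def by (rule sum.inter_filter)

lemma mass_init_state: "mass (bits m) (init_state m) = 1"
proof -
  have "mass (bits m) (init_state m) = (\<Sum>y\<in>bits m. if y = replicate m False then 1 else 0)"
    unfolding mass_def init_state_def by (intro sum.cong refl) auto
  then show ?thesis by (simp add: sum.delta)
qed

lemma norm_on_nonneg: "0 \<le> norm_on A \<psi>"
  by (simp add: norm_on_def mass_nonneg)

lemma norm_on_squared: "(norm_on A \<psi>)\<^sup>2 = mass A \<psi>"
  by (simp add: norm_on_def mass_nonneg)

lemma norm_on_triangle: "norm_on A (\<lambda>y. a y - c y) \<le> norm_on A (\<lambda>y. a y - b y) + norm_on A (\<lambda>y. b y - c y)"
proof -
  have "L2_set (\<lambda>y. cmod (a y - c y)) A \<le> L2_set (\<lambda>y. cmod (a y - b y) + cmod (b y - c y)) A"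
    by (rule L2_set_mono) (auto intro: order_trans[OF _ norm_triangle_ineq] simp: norm_triangle_sub)
  also have "\<dots> \<le> L2_set (\<lambda>y. cmod (a y - b y)) A + L2_set (\<lambda>y. cmod (b y - c y)) A"
    by (rule L2_set_triangle_ineq)
  finally show ?thesis by (simp add: norm_on_def mass_def L2_set_def)
qed

lemma square_add_le: "(x + y)\<^sup>2 \<le> 2 * x\<^sup>2 + 2 * (y :: real)\<^sup>2"
proof -
  have "0 \<le> (x - y)\<^sup>2" by simp
  then show ?thesis unfolding power2_diff power2_sum by linarith
qed

lemma cmod_diff_squared_le: "(cmod (a - b))\<^sup>2 \<le> 2 * (cmod a)\<^sup>2 + 2 * (cmod b)\<^sup>2"
  by (rule order_trans[OF power_mono[OF norm_triangle_ineq4] square_add_le]) simp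

lemma sum_reindex_inj_endo:
  assumes "finite S" "inj_on P S" "P ` S \<subseteq> S"
  shows "(\<Sum>y\<in>S. h (P y)) = (\<Sum>y\<in>S. h y)"
  using sum.reindex[OF assms(2), of h] endo_inj_surj[OF assms(1,3,2)] by simp

lemma sum_cmod_squared_orthonormal:
  fixes G :: "'a \<Rightarrow> 'a \<Rightarrow> complex"
  assumes fin: "finite K"
    and orth: "\<forall>a\<in>K. \<forall>b\<in>K. (\<Sum>c\<in>K. cnj (G c a) * G c b) = (if a = b then 1 else 0)"
  shows "(\<Sum>c\<in>K. (cmod (\<Sum>a\<in>K. G c a * v a))\<^sup>2) = (\<Sum>a\<in>K. (cmod (v a))\<^sup>2)"
proof -
  have orth': "(\<Sum>c\<in>K. G c a * cnj (G c b)) = (if a = b then 1 else 0)" if "a \<in> K" "b \<in> K" for a b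
  proof -
    have "(\<Sum>c\<in>K. G c a * cnj (G c b)) = cnj (\<Sum>c\<in>K. cnj (G c a) * G c b)"
      by (simp add: mult.commute)
    then show ?thesis using orth that by simp
  qed
  have "complex_of_real (\<Sum>c\<in>K. (cmod (\<Sum>a\<in>K. G c a * v a))\<^sup>2)
      = (\<Sum>c\<in>K. (\<Sum>a\<in>K. G c a * v a) * cnj (\<Sum>b\<in>K. G c b * v b))"
    unfolding of_real_sum by (intro sum.cong refl) (rule complex_norm_square)
  also have "\<dots> = (\<Sum>c\<in>K. \<Sum>b\<in>K. \<Sum>a\<in>K. v a * (cnj (v b) * (G c a * cnj (G c b))))"
    by (simp add: sum_distrib_left sum_distrib_right mult_ac)
  also have "\<dots> = (\<Sum>b\<in>K. \<Sum>a\<in>K. \<Sum>c\<in>K. v a * (cnj (v b) * (G c a * cnj (G c b))))"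
    by (subst sum.swap) (intro sum.cong refl sum.swap)
  also have "\<dots> = (\<Sum>b\<in>K. \<Sum>a\<in>K. v a * cnj (v b) * (\<Sum>c\<in>K. G c a * cnj (G c b)))"
    by (simp add: sum_distrib_left mult_ac)
  also have "\<dots> = (\<Sum>b\<in>K. \<Sum>a\<in>K. if a = b then v b * cnj (v b) else 0)"
    by (intro sum.cong refl) (auto simp: orth')
  also have "\<dots> = complex_of_real (\<Sum>a\<in>K. (cmod (v a))\<^sup>2)"
    using fin unfolding of_real_sum by (simp add: sum.delta' complex_norm_square[symmetric])
  finally show ?thesis by (simp only: of_real_eq_iff)
qed

lemma mass_apply_gate:
  assumes "valid_gate m g"
  shows "mass (bits m) (apply_gate m g \<psi>) = mass (bits m) \<psi>"
proof -
  obtain ps G where g: "g = (ps, G)" by (cases g)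
  have d: "distinct ps" and lt: "\<forall>p\<in>set ps. p < m"
    and orth: "\<forall>a\<in>bits (length ps). \<forall>b\<in>bits (length ps).
          (\<Sum>c\<in>bits (length ps). cnj (G c a) * G c b) = (if a = b then 1 else 0)"
    using assms by (auto simp: valid_gate_def g Let_def)
  define R where "R = (\<lambda>y. upd_pos y ps (replicate (length ps) False)) ` bits m"
  have "mass (bits m) (apply_gate m g \<psi>)
      = (\<Sum>r\<in>R. \<Sum>c\<in>bits (length ps). (cmod (apply_gate m g \<psi> (upd_pos r ps c)))\<^sup>2)"
    unfolding mass_def R_def by (rule sum_bits_split_positions[OF d lt])
  also have "\<dots> = (\<Sum>r\<in>R. \<Sum>c\<in>bits (length ps). (cmod (\<Sum>a\<in>bits (length ps). G c a * \<psi> (upd_pos r ps a)))\<^sup>2)"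
    by (intro sum.cong refl) (use d lt in \<open>auto simp: apply_gate_def g R_def\<close>)
  also have "\<dots> = (\<Sum>r\<in>R. \<Sum>a\<in>bits (length ps). (cmod (\<psi> (upd_pos r ps a)))\<^sup>2)"
    by (intro sum.cong refl sum_cmod_squared_orthonormal[OF finite_bits orth])
  also have "\<dots> = mass (bits m) \<psi>"
    unfolding mass_def R_def by (rule sum_bits_split_positions[OF d lt, symmetric])
  finally show ?thesis .
qed

lemma mass_apply_layer:
  assumes "valid_layer m gs"
  shows "mass (bits m) (apply_layer m gs \<psi>) = mass (bits m) \<psi>"
proof -
  have "\<forall>g\<in>set gs. valid_gate m g" using assms by (simp add: valid_layer_def)
  then show ?thesis unfolding apply_layer_def
    by (induction gs arbitrary: \<psi>) (auto simp: mass_apply_gate)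
qed

lemma apply_layer_diff:
  "apply_layer m gs (\<lambda>y. a y - b y) = (\<lambda>y. apply_layer m gs a y - apply_layer m gs b y)"
proof -
  have gate: "apply_gate m g (\<lambda>y. a y - b y) = (\<lambda>y. apply_gate m g a y - apply_gate m g b y)" for g a b
    by (auto simp: apply_gate_def algebra_simps sum_subtractf)
  show ?thesis unfolding apply_layer_def
    by (induction gs arbitrary: a b) (simp_all add: gate)
qed

subsection \<open>Oracle layers permute the computational basis\<close>

abbreviation query_oracle :: "query \<Rightarrow> nat" where "query_oracle q \<equiv> fst q"
abbreviation query_reg :: "query \<Rightarrow> nat list" where "query_reg q \<equiv> fst (snd q)"
abbreviation resp_reg :: "query \<Rightarrow> nat list" where "resp_reg q \<equiv> snd (snd q)"

definition length_preserving :: "nat \<Rightarrow> nat \<Rightarrow> sinstance \<Rightarrow> bool" where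
  "length_preserving n d I \<longleftrightarrow> (\<forall>i\<le>d. \<forall>x. length x = n \<longrightarrow> length (fst (I i) x) = n)"

definition query_answer :: "nat \<Rightarrow> sinstance \<Rightarrow> query \<Rightarrow> bool list \<Rightarrow> bool list" where
  "query_answer n I q y =
     enc n (Lfun I (query_oracle q) (take n (get_pos y (query_reg q))) (drop n (get_pos y (query_reg q))))"

definition query_perm :: "nat \<Rightarrow> sinstance \<Rightarrow> query \<Rightarrow> bool list \<Rightarrow> bool list" where
  "query_perm n I q y = upd_pos y (resp_reg q) (xorb (get_pos y (resp_reg q)) (query_answer n I q y))"

definition oracle_perm :: "nat \<Rightarrow> sinstance \<Rightarrow> query list \<Rightarrow> bool list \<Rightarrow> bool list" where
  "oracle_perm n I qs y = foldr (query_perm n I) qs y"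

text \<open>Unlike in a valid oracle layer, response registers may overlap; what matters is that no
  query reads a register that some query writes.\<close>

definition independent_queries :: "nat \<Rightarrow> nat \<Rightarrow> nat \<Rightarrow> query list \<Rightarrow> bool" where
  "independent_queries n d m qs \<longleftrightarrow> (\<forall>q\<in>set qs. valid_query n d m q) \<and>
     (\<forall>q\<in>set qs. \<forall>q'\<in>set qs. set (query_reg q) \<inter> set (resp_reg q') = {})"

lemma valid_query_facts:
  assumes "valid_query n d m q"
  shows "distinct (resp_reg q)" "\<forall>p\<in>set (resp_reg q). p < m" "set (query_reg q) \<inter> set (resp_reg q) = {}"
    "length (resp_reg q) = n + 1" "length (query_reg q) = 2 * n" "query_oracle q \<le> d"
  using assms by (cases q; auto simp: valid_query_def)+

lemma independent_queries_Cons: "independent_queries n d m (q # qs) \<Longrightarrow> independent_queries n d m qs"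
  by (simp add: independent_queries_def)

lemma valid_oracle_layer_independent:
  assumes "valid_oracle_layer n d m qs"
  shows "independent_queries n d m qs"
  unfolding independent_queries_def
proof (intro conjI ballI)
  show "\<And>q. q \<in> set qs \<Longrightarrow> valid_query n d m q" using assms by (simp add: valid_oracle_layer_def)
  fix q q' assume q: "q \<in> set qs" and q': "q' \<in> set qs"
  show "set (query_reg q) \<inter> set (resp_reg q') = {}"
  proof (cases "q = q'")
    case True
    have "valid_query n d m q" using assms q by (simp add: valid_oracle_layer_def)
    then show ?thesis using True valid_query_facts(3) by blast
  next
    case False
    obtain i j where "i < length qs" "j < length qs" "qs ! i = q" "qs ! j = q'"
      using q q' by (auto simp: in_set_conv_nth)
    with False have "query_qubits q \<inter> query_qubits q' = {}"
      using assms by (auto simp: valid_oracle_layer_def)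
    then show ?thesis by (cases q; cases q') (auto simp: query_qubits_def)
  qed
qed

lemma length_query_answer:
  assumes "length_preserving n d I" "valid_query n d m q"
  shows "length (query_answer n I q y) = n + 1"
proof -
  have "length (fst (I j) (take n (get_pos y (query_reg q)))) = n" if "j \<le> d" for j
    using assms that valid_query_facts(5)[OF assms(2)] by (auto simp: length_preserving_def)
  then show ?thesis using valid_query_facts(6)[OF assms(2)] by (auto simp: query_answer_def Lfun_def enc_def)
qed

lemma query_answer_cong:
  "get_pos z (query_reg q) = get_pos y (query_reg q) \<Longrightarrow> query_answer n K q z = query_answer n K q y"
  by (simp add: query_answer_def)

lemma length_query_perm [simp]: "length (query_perm n I q y) = length y"
  by (simp add: query_perm_def)

lemma get_pos_query_perm:
  "set xs \<inter> set (resp_reg q) = {} \<Longrightarrow> get_pos (query_perm n I q y) xs = get_pos y xs"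
  by (simp add: query_perm_def get_pos_upd_pos_disjoint)

lemma query_perm_involution:
  assumes "length_preserving n d I" "valid_query n d m q" "length y = m"
  shows "query_perm n I q (query_perm n I q y) = y"
proof -
  note f = valid_query_facts[OF assms(2)]
  have la: "length (query_answer n I q y) = n + 1" by (rule length_query_answer[OF assms(1,2)])
  have same: "query_answer n I q (query_perm n I q y) = query_answer n I q y"
    by (intro query_answer_cong get_pos_query_perm f(3))
  have lt: "\<forall>p\<in>set (resp_reg q). p < length y" using f assms(3) by auto
  have "get_pos (query_perm n I q y) (resp_reg q) = xorb (get_pos y (resp_reg q)) (query_answer n I q y)"
    unfolding query_perm_def using f lt la by simp
  then show ?thesis unfolding query_perm_def[of n I q "query_perm n I q y"] same
    using f lt la by (simp add: query_perm_def xorb_xorb_cancel)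
qed

lemma oracle_perm_Nil [simp]: "oracle_perm n I [] y = y"
  and oracle_perm_Cons [simp]: "oracle_perm n I (q # qs) y = query_perm n I q (oracle_perm n I qs y)"
  by (simp_all add: oracle_perm_def)

lemma length_oracle_perm [simp]: "length (oracle_perm n I qs y) = length y"
  by (induction qs) auto

lemma apply_query_perm:
  "apply_query n I m q \<psi> = (\<lambda>y. if length y = m then \<psi> (query_perm n I q y) else 0)"
  by (cases q) (auto simp: apply_query_def query_perm_def query_answer_def Let_def)

lemma apply_oracle_layer_perm:
  "length y = m \<Longrightarrow> apply_oracle_layer n I m qs \<psi> y = \<psi> (oracle_perm n I qs y)"
  unfolding apply_oracle_layer_def by (induction qs arbitrary: \<psi>) (simp_all add: apply_query_perm)

lemma apply_oracle_layer_diff: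
  "apply_oracle_layer n I m qs (\<lambda>y. a y - b y)
    = (\<lambda>y. apply_oracle_layer n I m qs a y - apply_oracle_layer n I m qs b y)"
proof -
  have query: "apply_query n I m q (\<lambda>y. a y - b y) = (\<lambda>y. apply_query n I m q a y - apply_query n I m q b y)"
    for q a b by (cases q) (auto simp: apply_query_def Let_def)
  show ?thesis unfolding apply_oracle_layer_def
    by (induction qs arbitrary: a b) (simp_all add: query)
qed

lemma get_pos_oracle_perm:
  "\<forall>q\<in>set qs. set xs \<inter> set (resp_reg q) = {} \<Longrightarrow> get_pos (oracle_perm n I qs y) xs = get_pos y xs"
  by (induction qs) (auto simp: get_pos_query_perm)

lemma query_answer_oracle_perm:
  "independent_queries n d m qs \<Longrightarrow> q' \<in> set qs
    \<Longrightarrow> query_answer n K q' (oracle_perm n I qs y) = query_answer n K q' y"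
  by (rule query_answer_cong, rule get_pos_oracle_perm) (auto simp: independent_queries_def)

lemma inj_on_oracle_perm:
  assumes "independent_queries n d m qs" "length_preserving n d I"
  shows "inj_on (oracle_perm n I qs) (bits m)"
  using assms
proof (induction qs)
  case (Cons q qs)
  have vq: "valid_query n d m q" using Cons.prems by (simp add: independent_queries_def)
  have ih: "inj_on (oracle_perm n I qs) (bits m)" using Cons independent_queries_Cons by blast
  show ?case
  proof (rule inj_onI)
    fix x y assume x: "x \<in> bits m" and y: "y \<in> bits m" and "oracle_perm n I (q # qs) x = oracle_perm n I (q # qs) y"
    then have "query_perm n I q (query_perm n I q (oracle_perm n I qs x))
        = query_perm n I q (query_perm n I q (oracle_perm n I qs y))" by simp
    then have "oracle_perm n I qs x = oracle_perm n I qs y"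
      using query_perm_involution[OF Cons.prems(2) vq] x y by simp
    then show "x = y" using ih x y by (auto dest: inj_onD)
  qed
qed (simp add: inj_on_def)

lemma oracle_perm_cong:
  assumes "independent_queries n d m qs" "\<forall>q\<in>set qs. query_answer n I q y = query_answer n J q y"
  shows "oracle_perm n I qs y = oracle_perm n J qs y"
  using assms
proof (induction qs)
  case (Cons q qs)
  have ih: "oracle_perm n I qs y = oracle_perm n J qs y"
    using Cons independent_queries_Cons by (metis list.set_intros(2))
  have "query_answer n I q (oracle_perm n I qs y) = query_answer n I q y"
    "query_answer n J q (oracle_perm n I qs y) = query_answer n J q y"
    using Cons.prems(1) by (intro query_answer_cong get_pos_oracle_perm; auto simp: independent_queries_def)+
  then have "query_answer n I q (oracle_perm n I qs y) = query_answer n J q (oracle_perm n I qs y)"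
    using Cons.prems(2) by simp
  then show ?case using ih by (simp add: query_perm_def)
qed simp

lemma mass_apply_oracle_layer:
  assumes "independent_queries n d m qs" "length_preserving n d I"
  shows "mass (bits m) (apply_oracle_layer n I m qs \<psi>) = mass (bits m) \<psi>"
proof -
  have "mass (bits m) (apply_oracle_layer n I m qs \<psi>) = (\<Sum>y\<in>bits m. (\<lambda>z. (cmod (\<psi> z))\<^sup>2) (oracle_perm n I qs y))"
    unfolding mass_def by (intro sum.cong refl) (auto simp: apply_oracle_layer_perm)
  also have "\<dots> = mass (bits m) \<psi>"
    unfolding mass_def by (rule sum_reindex_inj_endo) (use inj_on_oracle_perm[OF assms] in auto)
  finally show ?thesis .
qed

text \<open>Two oracles act identically outside the set of basis states on which some query receives
  different answers, and that set is invariant under both permutations.\<close>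

lemma mass_apply_oracle_layer_diff_le:
  assumes "independent_queries n d m qs" "length_preserving n d I" "length_preserving n d J"
  defines "B \<equiv> {y\<in>bits m. \<exists>q\<in>set qs. query_answer n I q y \<noteq> query_answer n J q y}"
  shows "mass (bits m) (\<lambda>y. apply_oracle_layer n I m qs \<phi> y - apply_oracle_layer n J m qs \<phi> y)
       \<le> 4 * mass B \<phi>"
proof -
  have Bsub: "B \<subseteq> bits m" by (auto simp: B_def)
  have finB: "finite B" by (rule finite_subset[OF Bsub finite_bits])
  have invariant: "oracle_perm n K qs ` B \<subseteq> B" for K
  proof
    fix z assume "z \<in> oracle_perm n K qs ` B"
    then obtain y where y: "y \<in> B" "z = oracle_perm n K qs y" by auto
    then obtain q where q: "q \<in> set qs" "query_answer n I q y \<noteq> query_answer n J q y"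
      by (auto simp: B_def)
    then have "query_answer n I q z \<noteq> query_answer n J q z"
      using query_answer_oracle_perm[OF assms(1) q(1)] y(2) by simp
    then show "z \<in> B" using q(1) y Bsub unfolding B_def by auto
  qed
  have perm_mass: "(\<Sum>y\<in>B. (cmod (\<phi> (oracle_perm n K qs y)))\<^sup>2) = mass B \<phi>" if "length_preserving n d K" for K
    unfolding mass_def
    by (rule sum_reindex_inj_endo[OF finB inj_on_subset[OF inj_on_oracle_perm[OF assms(1) that] Bsub] invariant])
  have "mass (bits m) (\<lambda>y. apply_oracle_layer n I m qs \<phi> y - apply_oracle_layer n J m qs \<phi> y)
      = (\<Sum>y\<in>bits m. (cmod (\<phi> (oracle_perm n I qs y) - \<phi> (oracle_perm n J qs y)))\<^sup>2)"
    unfolding mass_def by (intro sum.cong refl) (auto simp: apply_oracle_layer_perm)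
  also have "\<dots> = (\<Sum>y\<in>B. (cmod (\<phi> (oracle_perm n I qs y) - \<phi> (oracle_perm n J qs y)))\<^sup>2)"
  proof (rule sum.mono_neutral_right[OF finite_bits Bsub], intro ballI)
    fix y assume "y \<in> bits m - B"
    then have "oracle_perm n I qs y = oracle_perm n J qs y"
      by (intro oracle_perm_cong[OF assms(1)]) (auto simp: B_def)
    then show "(cmod (\<phi> (oracle_perm n I qs y) - \<phi> (oracle_perm n J qs y)))\<^sup>2 = 0" by simp
  qed
  also have "\<dots> \<le> (\<Sum>y\<in>B. 2 * (cmod (\<phi> (oracle_perm n I qs y)))\<^sup>2 + 2 * (cmod (\<phi> (oracle_perm n J qs y)))\<^sup>2)"
    by (intro sum_mono cmod_diff_squared_le)
  also have "\<dots> = 4 * mass B \<phi>"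
    using perm_mass[OF assms(2)] perm_mass[OF assms(3)] by (simp add: sum.distrib sum_distrib_left[symmetric])
  finally show ?thesis .
qed

lemma length_oracle_layer_le:
  assumes "valid_oracle_layer n d m qs"
  shows "length qs \<le> m"
proof -
  let ?h = "\<lambda>j. hd (resp_reg (qs ! j))"
  have vq: "j < length qs \<Longrightarrow> valid_query n d m (qs ! j)" for j
    using assms by (auto simp: valid_oracle_layer_def)
  have ne: "j < length qs \<Longrightarrow> resp_reg (qs ! j) \<noteq> []" for j
    using valid_query_facts(4)[OF vq] by fastforce
  have owned: "j < length qs \<Longrightarrow> ?h j \<in> query_qubits (qs ! j)" for j
    using ne[of j] by (cases "qs ! j") (auto simp: query_qubits_def)
  have "inj_on ?h {..<length qs}"
  proof (rule inj_onI, rule ccontr)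
    fix i j assume "i \<in> {..<length qs}" "j \<in> {..<length qs}" "?h i = ?h j" "i \<noteq> j"
    then show False using assms owned[of i] owned[of j] by (auto simp: valid_oracle_layer_def)
  qed
  moreover have "?h ` {..<length qs} \<subseteq> {..<m}"
    using valid_query_facts(2)[OF vq] ne by fastforce
  ultimately show ?thesis using card_inj_on_le[of ?h "{..<length qs}" "{..<m}"] by simp
qed

subsection \<open>Shadow oracles and the hybrid argument\<close>

text \<open>Replacing s_c by the empty string hides it: a query register holds a z of length n \<ge> 1,
  so in the k-th shadow oracle L_i answers bottom for every i > k.\<close>

definition hide_periods :: "nat \<Rightarrow> sinstance \<Rightarrow> sinstance" where
  "hide_periods k I = (\<lambda>c. if c < k then I c else (fst (I c), []))"

fun shadow_run :: "nat \<Rightarrow> sinstance \<Rightarrow> circuit \<Rightarrow> nat \<Rightarrow> qstate" where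
  "shadow_run n I C 0 = apply_layer (nqubits C) (ulayers C 0) (init_state (nqubits C))"
| "shadow_run n I C (Suc k) = apply_layer (nqubits C) (ulayers C (Suc k))
      (apply_oracle_layer n (hide_periods k I) (nqubits C) (olayers C k) (shadow_run n I C k))"

lemma length_preserving_hide_periods: "length_preserving n d I \<Longrightarrow> length_preserving n d (hide_periods k I)"
  by (simp add: length_preserving_def hide_periods_def)

lemma valid_circuit_independent_queries:
  "valid_circuit n d C \<Longrightarrow> j < d \<Longrightarrow> independent_queries n d (nqubits C) (olayers C j)"
  by (simp add: valid_circuit_def valid_oracle_layer_independent)

lemma valid_circuit_valid_query:
  "valid_circuit n d C \<Longrightarrow> j < d \<Longrightarrow> q \<in> set (olayers C j) \<Longrightarrow> valid_query n d (nqubits C) q"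
  using valid_circuit_independent_queries by (auto simp: independent_queries_def)

lemma query_answer_hide_periods_differs:
  assumes "n \<ge> 1" "length (query_reg q) = 2 * n"
    and "query_answer n I q y \<noteq> query_answer n (hide_periods k I) q y"
  shows "k < query_oracle q \<and> drop n (get_pos y (query_reg q)) = snd (I (query_oracle q - 1))"
  using assms by (auto simp: query_answer_def Lfun_def hide_periods_def split: if_splits)

lemma query_answer_hide_periods_cong:
  assumes "n \<ge> 1" "length (query_reg q) = 2 * n" "\<forall>c\<le>k. I c = I' c"
  shows "query_answer n (hide_periods k I) q y = query_answer n (hide_periods k I') q y"
  using assms by (auto simp: query_answer_def Lfun_def hide_periods_def split: if_splits)

lemma apply_oracle_layer_cong:
  assumes "\<forall>q\<in>set qs. \<forall>y. query_answer n I q y = query_answer n J q y"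
  shows "apply_oracle_layer n I m qs \<psi> = apply_oracle_layer n J m qs \<psi>"
  using assms unfolding apply_oracle_layer_def
proof (induction qs arbitrary: \<psi>)
  case (Cons q qs)
  then have "query_perm n I q = query_perm n J q" by (auto simp: query_perm_def)
  then have "apply_query n I m q \<psi> = apply_query n J m q \<psi>" by (simp add: apply_query_perm fun_eq_iff)
  then show ?case using Cons by simp
qed simp

lemma shadow_run_cong:
  assumes "valid_circuit n d C" "n \<ge> 1" "k \<le> d" "\<forall>c<k. I c = I' c"
  shows "shadow_run n I C k = shadow_run n I' C k"
  using assms(3,4)
proof (induction k)
  case (Suc k)
  have "query_answer n (hide_periods k I) q y = query_answer n (hide_periods k I') q y"
    if "q \<in> set (olayers C k)" for q y
  proof (rule query_answer_hide_periods_cong[OF assms(2)])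
    show "length (query_reg q) = 2 * n"
      using valid_query_facts(5)[OF valid_circuit_valid_query[OF assms(1) _ that]] Suc.prems by simp
  qed (use Suc.prems in \<open>auto simp: less_Suc_eq_le\<close>)
  then have "apply_oracle_layer n (hide_periods k I) (nqubits C) (olayers C k) \<psi>
      = apply_oracle_layer n (hide_periods k I') (nqubits C) (olayers C k) \<psi>" for \<psi>
    by (intro apply_oracle_layer_cong) blast
  then show ?case using Suc by simp
qed simp

lemma mass_shadow_run:
  assumes "valid_circuit n d C" "length_preserving n d I" "k \<le> d"
  shows "mass (bits (nqubits C)) (shadow_run n I C k) = 1"
  using assms(3)
proof (induction k)
  case 0
  then show ?case using assms(1) by (simp add: valid_circuit_def mass_apply_layer mass_init_state)
next
  case (Suc k)
  have "valid_layer (nqubits C) (ulayers C (Suc k))"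
    using assms(1) Suc.prems by (simp add: valid_circuit_def)
  moreover have "independent_queries n d (nqubits C) (olayers C k)"
    using valid_circuit_independent_queries assms(1) Suc.prems by simp
  ultimately show ?case
    using Suc by (simp add: mass_apply_layer mass_apply_oracle_layer length_preserving_hide_periods assms(2))
qed

definition shadow_error :: "nat \<Rightarrow> sinstance \<Rightarrow> circuit \<Rightarrow> nat \<Rightarrow> real" where
  "shadow_error n I C j = norm_on (bits (nqubits C))
     (\<lambda>y. apply_oracle_layer n I (nqubits C) (olayers C j) (shadow_run n I C j) y
        - apply_oracle_layer n (hide_periods j I) (nqubits C) (olayers C j) (shadow_run n I C j) y)"

lemma norm_run_shadow_run_le:
  assumes vc: "valid_circuit n d C" and lp: "length_preserving n d I" and "k \<le> d"
  shows "norm_on (bits (nqubits C)) (\<lambda>y. run n I C k y - shadow_run n I C k y) \<le> (\<Sum>j<k. shadow_error n I C j)"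
  using assms(3)
proof (induction k)
  case 0
  then show ?case by (simp add: norm_on_def mass_def)
next
  case (Suc k)
  let ?B = "bits (nqubits C)" and ?Q = "olayers C k" and ?m = "nqubits C"
  let ?A = "apply_oracle_layer n I ?m ?Q (run n I C k)"
    and ?S = "apply_oracle_layer n I ?m ?Q (shadow_run n I C k)"
    and ?H = "apply_oracle_layer n (hide_periods k I) ?m ?Q (shadow_run n I C k)"
  have vl: "valid_layer ?m (ulayers C (Suc k))" using vc Suc.prems by (simp add: valid_circuit_def)
  have iq: "independent_queries n d ?m ?Q" using valid_circuit_independent_queries vc Suc.prems by simp
  have "norm_on ?B (\<lambda>y. run n I C (Suc k) y - shadow_run n I C (Suc k) y) = norm_on ?B (\<lambda>y. ?A y - ?H y)"
    by (simp add: apply_layer_diff[symmetric] norm_on_def mass_apply_layer[OF vl])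
  also have "\<dots> \<le> norm_on ?B (\<lambda>y. ?A y - ?S y) + norm_on ?B (\<lambda>y. ?S y - ?H y)"
    by (rule norm_on_triangle)
  also have "norm_on ?B (\<lambda>y. ?A y - ?S y) = norm_on ?B (\<lambda>y. run n I C k y - shadow_run n I C k y)"
    by (simp add: apply_oracle_layer_diff[symmetric] norm_on_def mass_apply_oracle_layer[OF iq lp])
  finally show ?case using Suc by (simp add: shadow_error_def)
qed

text \<open>Weight the j-th shadow state puts on query registers that ask a hidden L_i (i > j) with
  the correct z = s_(i-1), summed over the queries of layer j.\<close>

definition exposed_mass :: "nat \<Rightarrow> sinstance \<Rightarrow> circuit \<Rightarrow> nat \<Rightarrow> real" where
  "exposed_mass n I C j = (\<Sum>q\<in>set (olayers C j). \<Sum>y\<in>bits (nqubits C).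
     if j < query_oracle q \<and> drop n (get_pos y (query_reg q)) = snd (I (query_oracle q - 1))
     then (cmod (shadow_run n I C j y))\<^sup>2 else 0)"

lemma shadow_error_squared_le:
  assumes vc: "valid_circuit n d C" and lp: "length_preserving n d I" and "j < d" "n \<ge> 1"
  shows "(shadow_error n I C j)\<^sup>2 \<le> 4 * exposed_mass n I C j"
proof -
  let ?m = "nqubits C" and ?Q = "olayers C j" and ?\<phi> = "shadow_run n I C j"
  let ?E = "\<lambda>y q. if j < query_oracle q \<and> drop n (get_pos y (query_reg q)) = snd (I (query_oracle q - 1))
     then (cmod (?\<phi> y))\<^sup>2 else 0"
  define B where "B = {y\<in>bits ?m. \<exists>q\<in>set ?Q. query_answer n I q y \<noteq> query_answer n (hide_periods j I) q y}"
  have "(shadow_error n I C j)\<^sup>2 \<le> 4 * mass B ?\<phi>"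
    unfolding shadow_error_def norm_on_squared B_def
    by (rule mass_apply_oracle_layer_diff_le[OF valid_circuit_independent_queries[OF vc \<open>j < d\<close>] lp
          length_preserving_hide_periods[OF lp]])
  also have "mass B ?\<phi> = (\<Sum>y\<in>bits ?m. if \<exists>q\<in>set ?Q. query_answer n I q y \<noteq> query_answer n (hide_periods j I) q y
      then (cmod (?\<phi> y))\<^sup>2 else 0)"
    unfolding B_def by (rule mass_eq_sum_if[OF finite_bits])
  also have "\<dots> \<le> (\<Sum>y\<in>bits ?m. \<Sum>q\<in>set ?Q. ?E y q)"
  proof (rule sum_mono)
    fix y
    show "(if \<exists>q\<in>set ?Q. query_answer n I q y \<noteq> query_answer n (hide_periods j I) q y
      then (cmod (?\<phi> y))\<^sup>2 else 0) \<le> (\<Sum>q\<in>set ?Q. ?E y q)"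
    proof (cases "\<exists>q\<in>set ?Q. query_answer n I q y \<noteq> query_answer n (hide_periods j I) q y")
      case True
      then obtain q where q: "q \<in> set ?Q" "query_answer n I q y \<noteq> query_answer n (hide_periods j I) q y"
        by blast
      then have "?E y q = (cmod (?\<phi> y))\<^sup>2"
        using query_answer_hide_periods_differs[OF \<open>n \<ge> 1\<close> _ q(2)]
          valid_query_facts(5)[OF valid_circuit_valid_query[OF vc \<open>j < d\<close> q(1)]] by simp
      then show ?thesis using True member_le_sum[OF q(1), of "?E y"] by (simp add: sum_nonneg)
    qed (simp add: sum_nonneg)
  qed
  also have "\<dots> = exposed_mass n I C j"
    unfolding exposed_mass_def by (rule sum.swap)
  finally show ?thesis by simp
qed

lemma mass_le_mass_add_norm_diff:
  assumes "T \<subseteq> A" "finite A"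
  shows "mass T r \<le> 2 * mass T s + 2 * (norm_on A (\<lambda>y. r y - s y))\<^sup>2"
proof -
  have "norm_on T r \<le> norm_on T s + norm_on T (\<lambda>y. r y - s y)"
    using norm_on_triangle[of T r "\<lambda>_. 0" s] by (simp add: add.commute)
  moreover have "norm_on T (\<lambda>y. r y - s y) \<le> norm_on A (\<lambda>y. r y - s y)"
    unfolding norm_on_def by (intro real_sqrt_le_mono mass_mono assms)
  ultimately have "(norm_on T r)\<^sup>2 \<le> (norm_on T s + norm_on A (\<lambda>y. r y - s y))\<^sup>2"
    by (intro power_mono norm_on_nonneg) simp
  also have "\<dots> \<le> 2 * (norm_on T s)\<^sup>2 + 2 * (norm_on A (\<lambda>y. r y - s y))\<^sup>2"
    by (rule square_add_le)
  finally show ?thesis by (simp add: norm_on_squared)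
qed

lemma output_prob_le_shadow:
  assumes vc: "valid_circuit n d C" and lp: "length_preserving n d I" and "n \<ge> 1"
  shows "output_prob n d I C t
    \<le> 2 * mass {y\<in>bits (nqubits C). get_pos y (outq C) = t} (shadow_run n I C d)
      + 8 * d * (\<Sum>j<d. exposed_mass n I C j)"
proof -
  let ?e = "shadow_error n I C" and ?B = "bits (nqubits C)"
  define D where "D = norm_on ?B (\<lambda>y. run n I C d y - shadow_run n I C d y)"
  have "D\<^sup>2 \<le> (\<Sum>j<d. ?e j)\<^sup>2"
    unfolding D_def by (intro power_mono norm_run_shadow_run_le[OF vc lp order_refl] norm_on_nonneg)
  also have "\<dots> \<le> d * (\<Sum>j<d. (?e j)\<^sup>2)"
    using sum_squared_le_sum_of_squares[of ?e "{..<d}"] by (simp add: mult.commute)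
  also have "\<dots> \<le> d * (\<Sum>j<d. 4 * exposed_mass n I C j)"
    by (intro mult_left_mono sum_mono shadow_error_squared_le[OF vc lp _ \<open>n \<ge> 1\<close>]) auto
  finally have "D\<^sup>2 \<le> 4 * d * (\<Sum>j<d. exposed_mass n I C j)"
    by (simp add: sum_distrib_left mult_ac)
  moreover have "output_prob n d I C t = mass {y\<in>?B. get_pos y (outq C) = t} (run n I C d)"
    unfolding output_prob_def by (rule mass_eq_sum_if[OF finite_bits, symmetric])
  ultimately show ?thesis
    using mass_le_mass_add_norm_diff[of "{y\<in>?B. get_pos y (outq C) = t}" ?B "run n I C d" "shadow_run n I C d"]
    unfolding D_def by fastforce
qed

subsection \<open>The period of a uniformly random Simon function\<close>

lemma finite_simon_set: "finite (simon_set n)"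
proof (rule finite_subset)
  show "simon_set n \<subseteq> (bits n \<rightarrow>\<^sub>E bits n) \<times> bits n"
    by (auto simp: simon_set_def simon_fun_def)
qed (intro finite_cartesian_product finite_PiE finite_bits)

lemma simon_set_nonempty:
  assumes "n \<ge> 1"
  shows "simon_set n \<noteq> {}"
proof -
  define s where "s = True # replicate (n - 1) False"
  define f where "f = restrict (\<lambda>x. False # tl x) (bits n)"
  have xorb_s: "xorb x s = (\<not> hd x) # tl x" if len: "length x = n" for x
  proof -
    obtain h t where x: "x = h # t" using len assms by (cases x) simp_all
    have "length t = n - 1" using len x by simp
    then show ?thesis unfolding s_def x by (intro nth_equalityI) (auto simp: nth_Cons' xorb_def)
  qed
  have "simon_fun n f s"
    unfolding simon_fun_def
  proof (intro conjI ballI)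
    show "s \<in> bits n" using assms by (simp add: s_def)
    show "s \<noteq> replicate n False" using assms by (cases n) (auto simp: s_def)
    show "f \<in> bits n \<rightarrow>\<^sub>E bits n" using assms by (auto simp: f_def)
    fix x y assume x: "x \<in> bits n" and y: "y \<in> bits n"
    obtain hx tx where "x = hx # tx" using x assms by (cases x) simp_all
    moreover obtain hy ty where "y = hy # ty" using y assms by (cases y) simp_all
    ultimately show "(f x = f y) = (y = x \<or> y = xorb x s)"
      using x y by (auto simp: f_def xorb_s)
  qed
  then show ?thesis by (auto simp: simon_set_def)
qed

text \<open>A bijection g of the n-bit strings that conjugates translation by a into translation by b;
  precomposing with g turns Simon functions of period b into Simon functions of period a.\<close>

definition xor_intertwiner :: "nat \<Rightarrow> (bool list \<Rightarrow> bool list) \<Rightarrow> bool list \<Rightarrow> bool list \<Rightarrow> bool" where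
  "xor_intertwiner n g a b \<longleftrightarrow> bij_betw g (bits n) (bits n) \<and> (\<forall>x\<in>bits n. g (xorb x a) = xorb (g x) b)"

lemma xor_intertwiner_comp:
  assumes "xor_intertwiner n g a b" "xor_intertwiner n h b c" "a \<in> bits n"
  shows "xor_intertwiner n (h \<circ> g) a c"
proof -
  have "bij_betw (h \<circ> g) (bits n) (bits n)"
    using assms by (auto simp: xor_intertwiner_def intro: bij_betw_trans)
  moreover have "(h \<circ> g) (xorb x a) = xorb ((h \<circ> g) x) c" if "x \<in> bits n" for x
  proof -
    have "g x \<in> bits n" using assms(1) that by (auto simp: xor_intertwiner_def dest: bij_betw_apply)
    then show ?thesis using assms that by (simp add: xor_intertwiner_def)
  qed
  ultimately show ?thesis by (simp add: xor_intertwiner_def)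
qed

text \<open>Translation by u on the half-space {x. x ! p}; it swaps the translations by a and by b
  when both have a one at position p and u = a xor b.\<close>

definition cond_xorb :: "bool list \<Rightarrow> nat \<Rightarrow> bool list \<Rightarrow> bool list" where
  "cond_xorb u p x = (if x ! p then xorb x u else x)"

lemma xor_intertwiner_cond_xorb:
  assumes a: "a \<in> bits n" and b: "b \<in> bits n" and p: "p < n" "a ! p" "b ! p"
  shows "xor_intertwiner n (cond_xorb (xorb a b) p) a b"
proof -
  let ?u = "xorb a b"
  have lu: "length ?u = n" and up: "\<not> ?u ! p" using a b p by simp_all
  have len: "length (cond_xorb ?u p x) = n" if "length x = n" for x
    using that lu by (simp add: cond_xorb_def)
  have inv: "cond_xorb ?u p (cond_xorb ?u p x) = x" if "length x = n" for x
  proof (cases "x ! p")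
    case True
    have "(xorb x ?u) ! p = x ! p" using that lu up p by simp
    then show ?thesis using True that lu by (simp add: cond_xorb_def xorb_assoc xorb_self xorb_replicate_False)
  qed (simp add: cond_xorb_def)
  have "bij_betw (cond_xorb ?u p) (bits n) (bits n)"
    by (rule bij_betw_byWitness[where f' = "cond_xorb ?u p"]) (use inv len in \<open>simp_all add: image_subset_iff\<close>)
  moreover have "cond_xorb ?u p (xorb x a) = xorb (cond_xorb ?u p x) b" if "x \<in> bits n" for x
    using that a b p by (intro nth_equalityI) (auto simp: cond_xorb_def)
  ultimately show ?thesis by (simp add: xor_intertwiner_def)
qed

lemma exists_nth_if_nonzero: "t \<in> bits n \<Longrightarrow> t \<noteq> replicate n False \<Longrightarrow> \<exists>p<n. t ! p"
  by (metis mem_bits_iff in_set_conv_nth replicate_eqI)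

text \<open>Without a common one-position, route through w = a[q := True] where b ! q.\<close>

lemma xor_intertwiner_exists:
  assumes "a \<in> bits n" "a \<noteq> replicate n False" "b \<in> bits n" "b \<noteq> replicate n False"
  shows "\<exists>g. xor_intertwiner n g a b"
proof (cases "\<exists>p<n. a ! p \<and> b ! p")
  case True
  then obtain p where "p < n" "a ! p" "b ! p" by blast
  then show ?thesis using xor_intertwiner_cond_xorb assms(1,3) by blast
next
  case False
  obtain p where p: "p < n" "a ! p" using exists_nth_if_nonzero assms(1,2) by blast
  obtain q where q: "q < n" "b ! q" using exists_nth_if_nonzero assms(3,4) by blast
  have "p \<noteq> q" using False p q by auto
  define w where "w = a[q := True]"
  have w: "w \<in> bits n" "w ! p" "w ! q" using assms p q \<open>p \<noteq> q\<close> by (auto simp: w_def)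
  show ?thesis
    using xor_intertwiner_comp[OF xor_intertwiner_cond_xorb[OF assms(1) w(1) p w(2)]
        xor_intertwiner_cond_xorb[OF w(1) assms(3) q(1) w(3) q(2)] assms(1)] by blast
qed

lemma simon_fun_comp_intertwiner:
  assumes f: "simon_fun n f b" and g: "xor_intertwiner n g a b"
    and a: "a \<in> bits n" "a \<noteq> replicate n False"
  shows "simon_fun n (restrict (f \<circ> g) (bits n)) a"
  unfolding simon_fun_def
proof (intro conjI ballI)
  have gb: "bij_betw g (bits n) (bits n)" and gx: "\<forall>x\<in>bits n. g (xorb x a) = xorb (g x) b"
    using g by (auto simp: xor_intertwiner_def)
  have fb: "f \<in> bits n \<rightarrow>\<^sub>E bits n"
    and fp: "\<forall>x\<in>bits n. \<forall>y\<in>bits n. f x = f y \<longleftrightarrow> (y = x \<or> y = xorb x b)"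
    using f by (auto simp: simon_fun_def)
  show "a \<in> bits n" "a \<noteq> replicate n False" by (fact a)+
  show "restrict (f \<circ> g) (bits n) \<in> bits n \<rightarrow>\<^sub>E bits n"
    using fb bij_betw_apply[OF gb] by (auto simp: PiE_iff)
  fix x y assume x: "x \<in> bits n" and y: "y \<in> bits n"
  have xa: "xorb x a \<in> bits n" using x a by simp
  have ginj: "u = v" if "u \<in> bits n" "v \<in> bits n" "g u = g v" for u v
    using bij_betw_imp_inj_on[OF gb] that by (auto dest: inj_onD)
  have "restrict (f \<circ> g) (bits n) x = restrict (f \<circ> g) (bits n) y \<longleftrightarrow> f (g x) = f (g y)"
    using x y by simp
  also have "\<dots> \<longleftrightarrow> (g y = g x \<or> g y = xorb (g x) b)"
    using fp bij_betw_apply[OF gb] x y by blast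
  also have "\<dots> \<longleftrightarrow> (y = x \<or> y = xorb x a)"
    using ginj[OF y x] ginj[OF y xa] gx x by auto
  finally show "(restrict (f \<circ> g) (bits n) x = restrict (f \<circ> g) (bits n) y) = (y = x \<or> y = xorb x a)" .
qed

lemma card_simon_fun_le:
  assumes "a \<in> bits n" "a \<noteq> replicate n False"
  shows "card {f. simon_fun n f b} \<le> card {f. simon_fun n f a}"
proof (cases "{f. simon_fun n f b} = {}")
  case False
  then obtain f0 where "simon_fun n f0 b" by auto
  then have "b \<in> bits n" "b \<noteq> replicate n False" by (auto simp: simon_fun_def)
  then obtain g where g: "xor_intertwiner n g a b" using xor_intertwiner_exists[OF assms] by blast
  then have gb: "bij_betw g (bits n) (bits n)" by (simp add: xor_intertwiner_def)
  let ?\<Phi> = "\<lambda>f. restrict (f \<circ> g) (bits n)"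
  have "{f. simon_fun n f a} \<subseteq> bits n \<rightarrow>\<^sub>E bits n" by (auto simp: simon_fun_def)
  then have fin: "finite {f. simon_fun n f a}" by (rule finite_subset) (intro finite_PiE finite_bits)
  have inj: "inj_on ?\<Phi> {f. simon_fun n f b}"
  proof (rule inj_onI)
    fix f1 f2 assume f1: "f1 \<in> {f. simon_fun n f b}" and f2: "f2 \<in> {f. simon_fun n f b}" and e: "?\<Phi> f1 = ?\<Phi> f2"
    have "f1 (g x) = f2 (g x)" if "x \<in> bits n" for x
      using fun_cong[OF e, of x] that by simp
    then have "f1 z = f2 z" if z: "z \<in> bits n" for z
    proof -
      have "z \<in> g ` bits n" using bij_betw_imp_surj_on[OF gb] z by simp
      then obtain x where "x \<in> bits n" "g x = z" by blast
      then show ?thesis using \<open>\<And>x. x \<in> bits n \<Longrightarrow> f1 (g x) = f2 (g x)\<close> by blast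
    qed
    moreover have "f1 \<in> bits n \<rightarrow>\<^sub>E bits n" "f2 \<in> bits n \<rightarrow>\<^sub>E bits n"
      using f1 f2 by (auto simp: simon_fun_def)
    ultimately show "f1 = f2" by (intro PiE_ext) auto
  qed
  have "?\<Phi> ` {f. simon_fun n f b} \<subseteq> {f. simon_fun n f a}"
    using simon_fun_comp_intertwiner[OF _ g assms] by auto
  then show ?thesis by (rule card_inj_on_le[OF inj _ fin])
qed simp

lemma card_simon_set_period: "card {v\<in>simon_set n. snd v = t} = card {f. simon_fun n f t}"
proof -
  have "{v\<in>simon_set n. snd v = t} = (\<lambda>f. (f, t)) ` {f. simon_fun n f t}"
    by (auto simp: simon_set_def)
  then show ?thesis by (simp add: card_image inj_on_def)
qed

lemma two_pow_minus_one_pos: "n \<ge> 1 \<Longrightarrow> (0 :: real) < 2 ^ n - 1"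
  using power_increasing[of 1 n "2 :: real"] by simp

text \<open>All 2^n - 1 nonzero periods occur equally often (each is at least as frequent as any other).\<close>

lemma card_simon_set_period_le:
  assumes "n \<ge> 1"
  shows "real (card {v\<in>simon_set n. snd v = t}) \<le> real (card (simon_set n)) / (2 ^ n - 1)"
proof -
  define NZ where "NZ = bits n - {replicate n False}"
  have partition: "simon_set n = (\<Union>a\<in>NZ. {v\<in>simon_set n. snd v = a})"
    by (auto simp: NZ_def simon_set_def simon_fun_def)
  have "card (simon_set n) = (\<Sum>a\<in>NZ. card {v\<in>simon_set n. snd v = a})"
    by (subst partition, rule card_UN_disjoint)
      (auto simp: NZ_def intro: finite_subset[OF _ finite_simon_set])
  also have "\<dots> \<ge> (\<Sum>a\<in>NZ. card {v\<in>simon_set n. snd v = t})"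
    by (intro sum_mono) (auto simp: card_simon_set_period NZ_def intro: card_simon_fun_le)
  finally have "card {v\<in>simon_set n. snd v = t} * (2 ^ n - 1) \<le> card (simon_set n)"
    by (simp add: NZ_def card_Diff_singleton card_bits mult.commute)
  then have "real (card {v\<in>simon_set n. snd v = t}) * (2 ^ n - 1) \<le> real (card (simon_set n))"
    using assms by (metis (mono_tags) of_nat_le_iff of_nat_mult of_nat_diff one_le_power one_le_numeral
        of_nat_1 of_nat_numeral of_nat_power)
  then show ?thesis using two_pow_minus_one_pos[OF assms] by (simp add: pos_le_divide_eq)
qed

lemma length_preserving_serial_instance:
  assumes "I \<in> serial_instances n d"
  shows "length_preserving n d I"
  unfolding length_preserving_def
proof (intro allI impI)
  fix i and x :: "bool list" assume "i \<le> d" "length x = n"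
  then have "simon_fun n (fst (I i)) (snd (I i))" "x \<in> bits n"
    using assms by (auto simp: serial_instances_def simon_set_def PiE_iff case_prod_unfold)
  then show "length (fst (I i) x) = n" unfolding simon_fun_def by (metis PiE_mem mem_bits_iff)
qed

lemma serial_instances_split:
  fixes n :: nat and h :: "sinstance \<Rightarrow> real"
  assumes "c \<le> d"
  defines "P \<equiv> PiE ({..d} - {c}) (\<lambda>_. simon_set n)"
  shows "(\<Sum>I\<in>serial_instances n d. h I) = (\<Sum>I\<in>P. \<Sum>v\<in>simon_set n. h (I(c := v)))"
    and "card (serial_instances n d) = card (simon_set n) * card P"
proof -
  have eq: "serial_instances n d = (\<lambda>(v, I). I(c := v)) ` (simon_set n \<times> P)"
  proof -
    have "{..d} = insert c ({..d} - {c})" using assms by auto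
    then show ?thesis unfolding serial_instances_def P_def by (metis PiE_insert_eq)
  qed
  have inj: "inj_on (\<lambda>(v, I). I(c := v)) (simon_set n \<times> P)"
    using inj_combinator[of c "{..d} - {c}" "\<lambda>_. simon_set n"] by (simp add: P_def)
  have "(\<Sum>I\<in>serial_instances n d. h I) = (\<Sum>vI\<in>simon_set n \<times> P. h ((\<lambda>(v, I). I(c := v)) vI))"
    unfolding eq by (subst sum.reindex[OF inj]) (simp add: comp_def)
  also have "\<dots> = (\<Sum>v\<in>simon_set n. \<Sum>I\<in>P. h (I(c := v)))"
    by (simp add: sum.cartesian_product case_prod_unfold)
  also have "\<dots> = (\<Sum>I\<in>P. \<Sum>v\<in>simon_set n. h (I(c := v)))"
    by (rule sum.swap)
  finally show "(\<Sum>I\<in>serial_instances n d. h I) = (\<Sum>I\<in>P. \<Sum>v\<in>simon_set n. h (I(c := v)))" .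
  show "card (serial_instances n d) = card (simon_set n) * card P"
    unfolding eq by (simp add: card_image[OF inj] card_cartesian_product)
qed

lemma sum_serial_instances_guess_period_le:
  fixes F :: "sinstance \<Rightarrow> bool list \<Rightarrow> real" and g :: "bool list \<Rightarrow> bool list"
  assumes "n \<ge> 1" "c \<le> d" "finite Y"
    and F_nonneg: "\<And>I y. 0 \<le> F I y"
    and F_sum: "\<And>I. I \<in> serial_instances n d \<Longrightarrow> (\<Sum>y\<in>Y. F I y) \<le> 1"
    and F_indep: "\<And>I v. F (I(c := v)) = F I"
  shows "(\<Sum>I\<in>serial_instances n d. \<Sum>y\<in>Y. if g y = snd (I c) then F I y else 0)
     \<le> real (card (serial_instances n d)) / (2 ^ n - 1)"
proof -
  let ?S = "simon_set n" and ?P = "PiE ({..d} - {c}) (\<lambda>_. simon_set n)"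
  define K where "K = real (card ?S) / (2 ^ n - 1)"
  obtain v0 where v0: "v0 \<in> ?S" using simon_set_nonempty[OF \<open>n \<ge> 1\<close>] by blast
  have inner: "(\<Sum>v\<in>?S. \<Sum>y\<in>Y. if g y = snd v then F (I(c := v)) y else 0) \<le> K" if "I \<in> ?P" for I
  proof -
    have I0: "I(c := v0) \<in> serial_instances n d"
      using that v0 \<open>c \<le> d\<close> unfolding serial_instances_def by (auto simp: PiE_iff extensional_def)
    have "(\<Sum>v\<in>?S. \<Sum>y\<in>Y. if g y = snd v then F (I(c := v)) y else 0)
        = (\<Sum>y\<in>Y. F (I(c := v0)) y * real (card {v\<in>?S. snd v = g y}))"
      by (subst sum.swap) (simp add: F_indep[of I] F_indep[of "I(c := v0)", simplified, symmetric]
          sum.If_cases[OF finite_simon_set] Int_def mult.commute eq_commute[of "g _"])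
    also have "\<dots> \<le> (\<Sum>y\<in>Y. F (I(c := v0)) y) * K"
      unfolding K_def sum_distrib_right
      by (intro sum_mono mult_left_mono card_simon_set_period_le[OF \<open>n \<ge> 1\<close>] F_nonneg)
    also have "\<dots> \<le> K"
      using F_sum[OF I0] two_pow_minus_one_pos[OF \<open>n \<ge> 1\<close>]
      by (intro mult_left_le_one_le) (auto simp: K_def intro: sum_nonneg F_nonneg)
    finally show ?thesis .
  qed
  have "(\<Sum>I\<in>serial_instances n d. \<Sum>y\<in>Y. if g y = snd (I c) then F I y else 0)
    = (\<Sum>I\<in>?P. \<Sum>v\<in>?S. \<Sum>y\<in>Y. if g y = snd v then F (I(c := v)) y else 0)"
    by (simp add: serial_instances_split(1)[OF \<open>c \<le> d\<close>])
  also have "\<dots> \<le> (\<Sum>I\<in>?P. K)" by (rule sum_mono[OF inner])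
  also have "\<dots> = real (card (serial_instances n d)) / (2 ^ n - 1)"
    unfolding K_def serial_instances_split(2)[OF \<open>c \<le> d\<close>] by simp
  finally show ?thesis .
qed

lemma sum_shadow_run_guess_period_le:
  assumes vc: "valid_circuit n d C" and "n \<ge> 1" "k \<le> c" "c \<le> d"
  shows "(\<Sum>I\<in>serial_instances n d. \<Sum>y\<in>bits (nqubits C).
       if g y = snd (I c) then (cmod (shadow_run n I C k y))\<^sup>2 else 0)
     \<le> real (card (serial_instances n d)) / (2 ^ n - 1)"
proof (rule sum_serial_instances_guess_period_le[OF \<open>n \<ge> 1\<close> \<open>c \<le> d\<close> finite_bits])
  show "(\<Sum>y\<in>bits (nqubits C). (cmod (shadow_run n I C k y))\<^sup>2) \<le> 1" if "I \<in> serial_instances n d" for I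
    using mass_shadow_run[OF vc length_preserving_serial_instance[OF that]] assms by (simp add: mass_def)
  show "(\<lambda>y. (cmod (shadow_run n (I(c := v)) C k y))\<^sup>2) = (\<lambda>y. (cmod (shadow_run n I C k y))\<^sup>2)" for I v
    using shadow_run_cong[OF vc \<open>n \<ge> 1\<close>, of k "I(c := v)" I] assms by simp
qed simp

lemma sum_exposed_mass_le:
  assumes vc: "valid_circuit n d C" and "n \<ge> 1" "j < d"
  shows "(\<Sum>I\<in>serial_instances n d. exposed_mass n I C j)
     \<le> real (nqubits C) * (real (card (serial_instances n d)) / (2 ^ n - 1))"
proof -
  let ?P = "serial_instances n d" and ?Q = "olayers C j"
  let ?K = "real (card ?P) / (2 ^ n - 1)"
  have per_query: "(\<Sum>I\<in>?P. \<Sum>y\<in>bits (nqubits C). if j < query_oracle q \<and> drop n (get_pos y (query_reg q)) = snd (I (query_oracle q - 1))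
        then (cmod (shadow_run n I C j y))\<^sup>2 else 0) \<le> ?K" if q: "q \<in> set ?Q" for q
  proof (cases "j < query_oracle q")
    case True
    then show ?thesis
      using sum_shadow_run_guess_period_le[OF vc \<open>n \<ge> 1\<close>, of j "query_oracle q - 1"]
        valid_query_facts(6)[OF valid_circuit_valid_query[OF vc \<open>j < d\<close> q]] by simp
  qed (simp add: two_pow_minus_one_pos[OF \<open>n \<ge> 1\<close>, THEN less_imp_le])
  have "(\<Sum>I\<in>?P. exposed_mass n I C j) = (\<Sum>q\<in>set ?Q. \<Sum>I\<in>?P. \<Sum>y\<in>bits (nqubits C).
      if j < query_oracle q \<and> drop n (get_pos y (query_reg q)) = snd (I (query_oracle q - 1))
      then (cmod (shadow_run n I C j y))\<^sup>2 else 0)"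
    unfolding exposed_mass_def by (rule sum.swap)
  also have "\<dots> \<le> real (card (set ?Q)) * ?K"
    using sum_mono[of "set ?Q", OF per_query] by simp
  also have "\<dots> \<le> real (nqubits C) * ?K"
  proof (rule mult_right_mono)
    have "card (set ?Q) \<le> length ?Q" by (rule card_length)
    also have "\<dots> \<le> nqubits C" using length_oracle_layer_le vc \<open>j < d\<close> by (auto simp: valid_circuit_def)
    finally show "real (card (set ?Q)) \<le> real (nqubits C)" by simp
  qed (simp add: two_pow_minus_one_pos[OF \<open>n \<ge> 1\<close>, THEN less_imp_le])
  finally show ?thesis .
qed

lemma success_prob_le:
  assumes vc: "valid_circuit n d C" and "n \<ge> 1"
  shows "success_prob n d C \<le> (2 + 8 * real d * real d * real (nqubits C)) / (2 ^ n - 1)"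
proof -
  let ?P = "serial_instances n d" and ?B = "bits (nqubits C)" and ?E = "(2::real) ^ n - 1"
  have finP: "finite ?P" unfolding serial_instances_def by (intro finite_PiE finite_simon_set) simp
  have neP: "?P \<noteq> {}"
    unfolding serial_instances_def using simon_set_nonempty[OF \<open>n \<ge> 1\<close>] by (simp add: PiE_eq_empty_iff)
  have "(\<Sum>I\<in>?P. output_prob n d I C (snd (I d))) \<le>
     (\<Sum>I\<in>?P. 2 * mass {y\<in>?B. get_pos y (outq C) = snd (I d)} (shadow_run n I C d)
       + 8 * d * (\<Sum>j<d. exposed_mass n I C j))"
    by (rule sum_mono) (use output_prob_le_shadow[OF vc length_preserving_serial_instance \<open>n \<ge> 1\<close>] in simp)
  also have "\<dots> = 2 * (\<Sum>I\<in>?P. \<Sum>y\<in>?B. if get_pos y (outq C) = snd (I d) then (cmod (shadow_run n I C d y))\<^sup>2 else 0)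
      + 8 * d * (\<Sum>j<d. \<Sum>I\<in>?P. exposed_mass n I C j)"
    unfolding mass_eq_sum_if[OF finite_bits] by (simp add: sum.distrib sum_distrib_left sum.swap[of _ ?P])
  also have "\<dots> \<le> 2 * (real (card ?P) / ?E) + 8 * d * (\<Sum>j<d. real (nqubits C) * (real (card ?P) / ?E))"
    by (intro add_mono mult_left_mono sum_shadow_run_guess_period_le[OF vc \<open>n \<ge> 1\<close>]
        sum_mono sum_exposed_mass_le[OF vc \<open>n \<ge> 1\<close>]) auto
  also have "\<dots> = (2 + 8 * real d * real d * real (nqubits C)) / ?E * real (card ?P)"
    by (simp add: add_divide_distrib algebra_simps)
  finally show ?thesis
    using finP neP unfolding success_prob_def integral_pmf_of_set[OF neP finP]
    by (simp add: pos_divide_le_eq card_gt_0_iff)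
qed

lemma success_prob_le_pow2:
  assumes "valid_circuit n d C" "n \<ge> 1"
  shows "success_prob n d C \<le> (4 + 16 * real d * real d * real (nqubits C)) / 2 ^ n"
proof -
  let ?X = "2 + 8 * real d * real d * real (nqubits C)"
  have "(2::real) \<le> 2 ^ n" using power_increasing[OF \<open>n \<ge> 1\<close>, of "2::real"] by simp
  then have "?X / (2 ^ n - 1) \<le> ?X / (2 ^ n / 2)"
    by (intro divide_left_mono) auto
  also have "\<dots> = (4 + 16 * real d * real d * real (nqubits C)) / 2 ^ n"
    by (simp add: field_simps)
  finally show ?thesis using success_prob_le[OF assms] by linarith
qed

theorem mainTheorem1:
  fixes d a b :: nat
  assumes "d \<ge> 1"
  shows "\<exists>c k::nat. \<forall>n\<ge>1. \<forall>C. valid_circuit n d C \<longrightarrow> nqubits C \<le> a * n ^ b + a \<longrightarrow>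
           success_prob n d C \<le> real c * real n ^ k / 2 ^ n"
proof (intro exI allI impI)
  fix n C assume "1 \<le> n" and vc: "valid_circuit n d C" and size: "nqubits C \<le> a * n ^ b + a"
  have N: "1 \<le> real n ^ b" using \<open>1 \<le> n\<close> by simp
  have "real (nqubits C) \<le> real a * real n ^ b + real a"
    using size by (metis of_nat_add of_nat_le_iff of_nat_mult of_nat_power)
  also have "\<dots> \<le> 2 * real a * real n ^ b"
    using mult_left_mono[OF N, of "real a"] by simp
  finally have "4 + 16 * real d * real d * real (nqubits C) \<le> 4 * real n ^ b + 16 * real d * real d * (2 * real a * real n ^ b)"
    using N by (intro add_mono mult_left_mono) auto
  also have "\<dots> = real (4 + 32 * d * d * a) * real n ^ b"
    by (simp add: algebra_simps)
  finally show "success_prob n d C \<le> real (4 + 32 * d * d * a) * real n ^ b / 2 ^ n"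
    using success_prob_le_pow2[OF vc \<open>1 \<le> n\<close>] divide_right_mono[of _ _ "(2::real) ^ n"] by force
qed

end
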